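(* For all integers $r>0$, $d\ge 0$, $j\ge 0$, we have $\widetilde{A}_{r,d}(j) = A_{r,d}(j)$.
   Context: For integers $r>0$, $d\ge 0$, $j$: let $\Theta_{r,d}(j)$ be the set of tuples $\vec k=(k_1,\dots,k_l)\in\mathbb{Z}^l$ (with $l\ge 0$ arbitrary) such that $0\le k_i\le r$ for all $i$, $\sum_i k_i = rd$, and $\sum_i i\,k_i = j + rd(d+1)/2$; and set $\widetilde{A}_{r,d}(j)\coloneqq \sum_{\vec k\in\Theta_{r,d}(j)} \prod_{i=1}^l \binom{r}{k_i}$. For a Young diagram $Y$, $|Y|$ is its number of boxes and $c(Y)$ its number of columns; for an $r$-tuple $\vec Y=(Y_1,\dots,Y_r)$, $|\vec Y|=\sum_\alpha |Y_\alpha|$; for $\vec m=(m_1,\dots,m_r)\in\mathbb{Z}^r$, $(\vec m,\vec m)\coloneqq \frac{1}{2r}\sum_{\alpha,\beta=1}^r (m_\alpha-m_\beta)^2$. Then $A_{r,d}(j)$ is the number of $r$-tuples $(m_\alpha, Y_\alpha)_{\alpha=1}^r$ with $m_\alpha\in\mathbb{Z}_{\ge 0}$, $\sum_\alpha m_\alpha = rd$, each $Y_\alpha$ a Young diagram with $c(Y_\alpha)\le m_\alpha$, and $|\vec Y| + (\vec m,\vec m)/2 = j$. *)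

theory Defs
  imports Complex_Main
begin

text \<open>A tuple (k_1,...,k_l) is represented by the list ks with ks!(i-1) = k_i.
  Tuples differing only by trailing zeros are identified (otherwise Theta would be
  infinite); we take the canonical representative with no trailing zero.\<close>

definition Theta :: "nat \<Rightarrow> nat \<Rightarrow> nat \<Rightarrow> nat list set" where
  "Theta r d j = {ks. (ks = [] \<or> last ks \<noteq> 0)
      \<and> (\<forall>i<length ks. ks ! i \<le> r)
      \<and> sum_list ks = r * d
      \<and> (\<Sum>i<length ks. (i + 1) * ks ! i) = j + r * d * (d + 1) div 2}"

definition A_tilde :: "nat \<Rightarrow> nat \<Rightarrow> nat \<Rightarrow> nat" where
  "A_tilde r d j = (\<Sum>ks\<in>Theta r d j. \<Prod>i<length ks. r choose (ks ! i))"

text \<open>Young diagram: list of row lengths, weakly decreasing, positive.\<close>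

definition young :: "nat list \<Rightarrow> bool" where
  "young Y \<longleftrightarrow> sorted_wrt (\<ge>) Y \<and> 0 \<notin> set Y"

definition ysize :: "nat list \<Rightarrow> nat" where
  "ysize Y = sum_list Y"

definition ncols :: "nat list \<Rightarrow> nat" where
  "ncols Y = (if Y = [] then 0 else hd Y)"

definition pairing :: "nat list \<Rightarrow> real" where
  "pairing ms = (1 / (2 * real (length ms))) *
     (\<Sum>a<length ms. \<Sum>b<length ms. (real (ms ! a) - real (ms ! b))\<^sup>2)"

definition A_count :: "nat \<Rightarrow> nat \<Rightarrow> nat \<Rightarrow> nat" where
  "A_count r d j = card {t :: (nat \<times> nat list) list.
      length t = r
      \<and> (\<forall>p\<in>set t. young (snd p) \<and> ncols (snd p) \<le> fst p)
      \<and> sum_list (map fst t) = r * d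
      \<and> real (sum_list (map (ysize \<circ> snd) t)) + pairing (map fst t) / 2 = real j}"

end

theory Submission
  imports Defs "HOL-Library.FuncSet"
begin

text \<open>Both numbers count \<open>r\<close>-tuples \<open>(S\<^sub>1, \<dots>, S\<^sub>r)\<close> of finite sets of positive
  integers with \<open>\<Sum> |S\<^sub>\<alpha>| = rd\<close> and \<open>\<Sum>\<^sub>\<alpha> \<Sum>S\<^sub>\<alpha> = j + rd(d+1)/2\<close>. Grouping the tuples by
  their occupancy vector \<open>k\<^sub>i = #{\<alpha>. i \<in> S\<^sub>\<alpha>}\<close> yields \<open>\<Prod> (r choose k\<^sub>i)\<close> tuples for each
  admissible \<open>k\<close>, which is \<open>A_tilde\<close>. On the other hand, the \<open>m\<close>-element sets of positive
  integers with sum \<open>w\<close> are equinumerous with the Young diagrams with at most \<open>m\<close> columns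
  and \<open>w - m(m+1)/2\<close> boxes, and \<open>\<Sum>\<^sub>\<alpha> m\<^sub>\<alpha>(m\<^sub>\<alpha>+1)/2 = rd(d+1)/2 + (m,m)/2\<close> whenever
  \<open>\<Sum> m\<^sub>\<alpha> = rd\<close>; applying such a bijection componentwise yields \<open>A_count\<close>.\<close>

lemma bij_betw_fibres:
  assumes "\<And>k. finite {x \<in> A. f x = k}" "\<And>k. finite {y \<in> B. g y = k}"
    and "\<And>k. card {x \<in> A. f x = k} = card {y \<in> B. g y = k}"
  obtains h where "bij_betw h A B" "\<And>x. x \<in> A \<Longrightarrow> g (h x) = f x"
proof -
  obtain b where b: "\<And>k. bij_betw (b k) {x \<in> A. f x = k} {y \<in> B. g y = k}"
    using finite_same_card_bij[OF assms] by metis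
  define h where "h x = b (f x) x" for x
  have fibre: "h x \<in> {y \<in> B. g y = f x}" if "x \<in> A" for x
    using bij_betw_apply[OF b[of "f x"]] that by (simp add: h_def)
  have "inj_on h A"
  proof (rule inj_onI)
    fix x y assume xy: "x \<in> A" "y \<in> A" "h x = h y"
    then have "f x = f y" using fibre[OF xy(1)] fibre[OF xy(2)] by simp
    with xy show "x = y"
      using bij_betw_imp_inj_on[OF b[of "f x"]] by (auto simp: h_def dest: inj_onD)
  qed
  moreover have "B \<subseteq> h ` A"
  proof
    fix y assume "y \<in> B"
    then obtain x where "x \<in> A" "f x = g y" "b (g y) x = y"
      using bij_betw_imp_surj_on[OF b[of "g y"]] by force
    then have "h x = y" by (simp add: h_def)
    with \<open>x \<in> A\<close> show "y \<in> h ` A" by blast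
  qed
  ultimately have "bij_betw h A B"
    using fibre by (auto simp: bij_betw_def)
  with fibre that show ?thesis by blast
qed

section \<open>Sets of positive integers and Young diagrams\<close>

definition triangular :: "nat \<Rightarrow> nat" where
  "triangular m = m * (m + 1) div 2"

lemma triangular_0 [simp]: "triangular 0 = 0"
  by (simp add: triangular_def)

lemma triangular_Suc: "triangular (Suc m) = triangular m + Suc m"
  by (simp add: triangular_def)

lemma real_triangular: "real (triangular m) = (real m ^ 2 + real m) / 2"
proof -
  have "even (m * (m + 1))" by simp
  then show ?thesis
    by (simp add: triangular_def real_of_nat_div power2_eq_square algebra_simps)
qed

definition young_bounded :: "nat \<Rightarrow> nat \<Rightarrow> nat list set" where
  "young_bounded m n = {Y. young Y \<and> ncols Y \<le> m \<and> ysize Y = n}"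

definition nat_subsets :: "nat \<Rightarrow> nat \<Rightarrow> nat set set" where
  "nat_subsets m w = {S. finite S \<and> card S = m \<and> \<Sum>S = w}"

definition pos_subsets :: "nat \<Rightarrow> nat \<Rightarrow> nat set set" where
  "pos_subsets m w = {S. finite S \<and> 0 \<notin> S \<and> card S = m \<and> \<Sum>S = w}"

lemma young_Cons: "young (y # Y) \<longleftrightarrow> (\<forall>z\<in>set Y. z \<le> y) \<and> young Y \<and> 0 < y"
  unfolding young_def by auto

lemma young_le_ncols: "young Y \<Longrightarrow> z \<in> set Y \<Longrightarrow> z \<le> ncols Y"
  by (cases Y) (auto simp: young_Cons ncols_def)

lemma length_le_sum_list: "0 \<notin> set (xs :: nat list) \<Longrightarrow> length xs \<le> sum_list xs"
  by (induction xs) auto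

lemma finite_young_bounded: "finite (young_bounded m n)"
proof (rule finite_subset)
  show "young_bounded m n \<subseteq> {xs. set xs \<subseteq> {0..n} \<and> length xs \<le> n}"
    using length_le_sum_list member_le_sum_list
    by (fastforce simp: young_bounded_def young_def ysize_def)
  show "finite {xs. set xs \<subseteq> {0..n} \<and> length xs \<le> n}"
    by (rule finite_lists_length_le) auto
qed

lemma finite_pos_subsets: "finite (pos_subsets m w)"
proof (rule finite_subset)
  show "pos_subsets m w \<subseteq> Pow {..w}"
    using member_le_sum by (fastforce simp: pos_subsets_def)
qed auto

lemma young_bounded_0: "young_bounded 0 n = (if n = 0 then {[]} else {})"
proof -
  have "young Y \<Longrightarrow> ncols Y \<le> 0 \<Longrightarrow> Y = []" for Y
    by (cases Y) (auto simp: young_Cons ncols_def)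
  then show ?thesis
    by (auto simp: young_bounded_def young_def ncols_def ysize_def)
qed

lemma young_bounded_Suc:
  "young_bounded (Suc m) n = young_bounded m n \<union>
     (if Suc m \<le> n then Cons (Suc m) ` young_bounded (Suc m) (n - Suc m) else {})"
  (is "_ = _ \<union> ?B")
proof -
  have "{Y \<in> young_bounded (Suc m) n. ncols Y = Suc m} = ?B"
  proof (intro set_eqI iffI)
    fix Y assume "Y \<in> {Y \<in> young_bounded (Suc m) n. ncols Y = Suc m}"
    then obtain Z where Z: "Y = Suc m # Z" "young (Suc m # Z)" "sum_list Z + Suc m = n"
      by (cases Y) (auto simp: young_bounded_def ncols_def ysize_def)
    then have "Z \<in> young_bounded (Suc m) (n - Suc m)"
      by (auto simp: young_bounded_def young_Cons ncols_def ysize_def)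
    with Z show "Y \<in> ?B" by auto
  next
    fix Y assume "Y \<in> ?B"
    then obtain Z where Z: "Y = Suc m # Z" "Z \<in> young_bounded (Suc m) (n - Suc m)" "Suc m \<le> n"
      by (auto split: if_splits)
    then have "\<forall>z\<in>set Z. z \<le> Suc m"
      using young_le_ncols[of Z] by (auto simp: young_bounded_def intro: order_trans)
    with Z show "Y \<in> {Y \<in> young_bounded (Suc m) n. ncols Y = Suc m}"
      by (auto simp: young_bounded_def young_Cons ncols_def ysize_def)
  qed
  moreover have "young_bounded (Suc m) n =
      young_bounded m n \<union> {Y \<in> young_bounded (Suc m) n. ncols Y = Suc m}"
    by (auto simp: young_bounded_def)
  ultimately show ?thesis by simp
qed

lemma card_young_bounded_Suc:
  "card (young_bounded (Suc m) n) =
     card (young_bounded m n) + (if Suc m \<le> n then card (young_bounded (Suc m) (n - Suc m)) else 0)"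
proof -
  have "ncols Y \<le> m" if "Y \<in> young_bounded m n" for Y
    using that by (simp add: young_bounded_def)
  then have "young_bounded m n \<inter> Cons (Suc m) ` young_bounded (Suc m) (n - Suc m) = {}"
    by (force simp: ncols_def)
  then show ?thesis
    by (subst young_bounded_Suc) (simp add: card_Un_disjoint finite_young_bounded card_image)
qed

lemma card_le_sum_pos: "finite S \<Longrightarrow> 0 \<notin> S \<Longrightarrow> card S \<le> \<Sum>(S :: nat set)"
  using sum_mono[of S "\<lambda>_. 1" id] by (simp add: Suc_le_eq) (metis neq0_conv)

lemma sum_image_Suc: "finite S \<Longrightarrow> \<Sum>(Suc ` S) = \<Sum>S + card S"
proof -
  assume "finite S"
  have "\<Sum>(Suc ` S) = sum Suc S" by (simp add: sum.reindex)
  also have "\<dots> = \<Sum>S + card S" using \<open>finite S\<close> by (induction rule: finite_induct) auto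
  finally show ?thesis .
qed

lemma pos_subsets_eq_image_Suc: "pos_subsets m (w + m) = image Suc ` nat_subsets m w"
proof (intro set_eqI iffI)
  fix S assume S: "S \<in> pos_subsets m (w + m)"
  define T where "T = (\<lambda>x. x - 1) ` S"
  have "Suc (x - 1) = x" if "x \<in> S" for x
    using S that by (cases x) (auto simp: pos_subsets_def)
  then have ST: "S = Suc ` T"
    by (force simp: T_def image_image)
  have "finite T"
    using S by (simp add: T_def pos_subsets_def)
  moreover have "card T = m"
    using S by (simp add: ST card_image pos_subsets_def)
  moreover have "\<Sum>T = w"
    using S sum_image_Suc[OF \<open>finite T\<close>] by (simp add: ST card_image pos_subsets_def)
  ultimately show "S \<in> image Suc ` nat_subsets m w"
    by (auto simp: ST nat_subsets_def)
next
  fix S assume "S \<in> image Suc ` nat_subsets m w"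
  then obtain T where "S = Suc ` T" "finite T" "card T = m" "\<Sum>T = w"
    by (auto simp: nat_subsets_def)
  then show "S \<in> pos_subsets m (w + m)"
    by (simp add: pos_subsets_def sum_image_Suc card_image)
qed

lemma nat_subsets_Suc:
  "nat_subsets (Suc m) w = pos_subsets (Suc m) w \<union> insert 0 ` pos_subsets m w"
proof (intro set_eqI iffI)
  fix S assume S: "S \<in> nat_subsets (Suc m) w"
  show "S \<in> pos_subsets (Suc m) w \<union> insert 0 ` pos_subsets m w"
  proof (cases "0 \<in> S")
    case True
    with S have "S - {0} \<in> pos_subsets m w"
      by (auto simp: nat_subsets_def pos_subsets_def sum_diff1_nat)
    with True show ?thesis by (auto intro!: image_eqI[of _ _ "S - {0}"])
  qed (use S in \<open>auto simp: nat_subsets_def pos_subsets_def\<close>)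
qed (auto simp: nat_subsets_def pos_subsets_def)

lemma card_pos_subsets_Suc:
  "card (pos_subsets (Suc m) w) =
     (if Suc m \<le> w then card (pos_subsets (Suc m) (w - Suc m)) + card (pos_subsets m (w - Suc m)) else 0)"
proof (cases "Suc m \<le> w")
  case False
  then have "pos_subsets (Suc m) w = {}"
    using card_le_sum_pos by (fastforce simp: pos_subsets_def)
  with False show ?thesis by simp
next
  case True
  define v where "v = w - Suc m"
  have "inj_on (insert 0) (pos_subsets m v)"
    by (rule inj_onI) (auto simp: pos_subsets_def insert_ident)
  then have "card (nat_subsets (Suc m) v) = card (pos_subsets (Suc m) v) + card (pos_subsets m v)"
    unfolding nat_subsets_Suc
    by (subst card_Un_disjoint) (auto simp: finite_pos_subsets card_image, auto simp: pos_subsets_def)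
  moreover have "card (pos_subsets (Suc m) w) = card (nat_subsets (Suc m) v)"
    using pos_subsets_eq_image_Suc[of "Suc m" v] True
    by (simp add: v_def card_image inj_on_def inj_image_eq_iff)
  ultimately show ?thesis
    using True by (simp add: v_def)
qed

lemma pos_subsets_0: "pos_subsets 0 w = (if w = 0 then {{}} else {})"
  by (auto simp: pos_subsets_def)

lemma card_pos_subsets:
  "card (pos_subsets m w) =
     (if triangular m \<le> w then card (young_bounded m (w - triangular m)) else 0)"
proof (induction w arbitrary: m rule: less_induct)
  case (less w)
  show ?case
  proof (cases m)
    case 0
    then show ?thesis by (simp add: pos_subsets_0 young_bounded_0)
  next
    case (Suc k)
    show ?thesis
    proof (cases "Suc k \<le> w")
      case False
      then show ?thesis using Suc card_pos_subsets_Suc[of k w] by (simp add: triangular_Suc)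
    next
      case True
      then show ?thesis
        using Suc card_pos_subsets_Suc[of k w] less[of "w - Suc k"]
          card_young_bounded_Suc[of k "w - triangular (Suc k)"]
        by (auto simp: triangular_Suc ac_simps)
    qed
  qed
qed

section \<open>Tuples of sets and tuples of Young diagrams\<close>

definition pos_sets :: "nat set set" where
  "pos_sets = {S. finite S \<and> 0 \<notin> S}"

definition young_pairs :: "(nat \<times> nat list) set" where
  "young_pairs = {p. young (snd p) \<and> ncols (snd p) \<le> fst p}"

lemma obtain_pos_sets_young_pairs_bij:
  obtains h where "bij_betw h pos_sets young_pairs"
    and "\<And>S. S \<in> pos_sets \<Longrightarrow> fst (h S) = card S"
    and "\<And>S. S \<in> pos_sets \<Longrightarrow> ysize (snd (h S)) + triangular (card S) = \<Sum>S"
proof -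
  let ?f = "\<lambda>S. (card S, \<Sum>S)" and ?g = "\<lambda>p. (fst p, ysize (snd p) + triangular (fst p))"
  have A: "{S \<in> pos_sets. ?f S = (m, w)} = pos_subsets m w" for m w
    by (auto simp: pos_sets_def pos_subsets_def)
  have B: "{p \<in> young_pairs. ?g p = (m, w)} =
      (if triangular m \<le> w then Pair m ` young_bounded m (w - triangular m) else {})" for m w
  proof (intro set_eqI)
    fix p :: "nat \<times> nat list"
    obtain m' Y where p: "p = (m', Y)" by fastforce
    show "p \<in> {p \<in> young_pairs. ?g p = (m, w)} \<longleftrightarrow>
        p \<in> (if triangular m \<le> w then Pair m ` young_bounded m (w - triangular m) else {})"
      by (cases "triangular m \<le> w") (auto simp: p young_pairs_def young_bounded_def)
  qed
  have "finite {S \<in> pos_sets. ?f S = k}" for k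
    by (cases k) (simp only: A finite_pos_subsets)
  moreover have "finite {p \<in> young_pairs. ?g p = k}" for k
    by (cases k) (simp only: B, simp add: finite_young_bounded)
  moreover have "card {S \<in> pos_sets. ?f S = k} = card {p \<in> young_pairs. ?g p = k}" for k
    by (cases k) (simp only: A B, simp add: card_pos_subsets card_image inj_on_def)
  ultimately obtain h where h: "bij_betw h pos_sets young_pairs"
    "\<And>S. S \<in> pos_sets \<Longrightarrow> ?g (h S) = ?f S"
    by (rule bij_betw_fibres) blast
  show ?thesis
  proof (rule that[OF h(1)])
    fix S assume "S \<in> pos_sets"
    with h(2) show "fst (h S) = card S" and "ysize (snd (h S)) + triangular (card S) = \<Sum>S"
      by (metis fst_conv snd_conv)+
  qed
qed

lemma sum_sum_diff_squared:
  fixes x :: "nat \<Rightarrow> real"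
  shows "(\<Sum>a<n. \<Sum>b<n. (x a - x b)\<^sup>2) =
    2 * real n * (\<Sum>a<n. (x a)\<^sup>2) - 2 * (\<Sum>a<n. x a)\<^sup>2"
  by (simp add: power2_diff sum.distrib sum_subtractf sum_distrib_left sum_distrib_right
      power2_eq_square algebra_simps)

lemma sum_list_triangular:
  assumes "ms \<noteq> []"
  shows "real (sum_list (map triangular ms)) =
    (real (sum_list ms))\<^sup>2 / (2 * real (length ms)) + real (sum_list ms) / 2 + pairing ms / 2"
proof -
  define n where "n = length ms"
  define x where "x a = real (ms ! a)" for a
  have n: "real n > 0" using assms by (simp add: n_def)
  have sum: "real (sum_list ms) = (\<Sum>a<n. x a)"
    by (simp add: sum_list_sum_nth atLeast0LessThan x_def n_def)
  have "real (sum_list (map triangular ms)) = (\<Sum>a<n. ((x a)\<^sup>2 + x a) / 2)"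
    by (simp add: sum_list_sum_nth atLeast0LessThan x_def n_def real_triangular)
  also have "\<dots> = (\<Sum>a<n. (x a)\<^sup>2) / 2 + (\<Sum>a<n. x a) / 2"
    by (simp add: sum_divide_distrib[symmetric] sum.distrib add_divide_distrib)
  moreover have "pairing ms = (\<Sum>a<n. (x a)\<^sup>2) - (\<Sum>a<n. x a)\<^sup>2 / real n"
    using n by (simp add: pairing_def sum_sum_diff_squared x_def n_def field_simps)
  ultimately show ?thesis
    using n by (simp add: sum n_def [symmetric] field_simps power2_eq_square)
qed

lemma sum_list_triangular_balanced:
  assumes "length ms = r" "r > 0" "sum_list ms = r * d"
  shows "real (sum_list (map triangular ms)) = real (r * d * (d + 1) div 2) + pairing ms / 2"
proof -
  have "even (r * d * (d + 1))" by simp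
  then have "real (r * d * (d + 1) div 2) = real (r * d) ^ 2 / (2 * real r) + real (r * d) / 2"
    using assms(2) by (simp add: real_of_nat_div power2_eq_square field_simps)
  moreover have "ms \<noteq> []"
    using assms(1,2) by auto
  ultimately show ?thesis
    using sum_list_triangular[of ms] assms(1,3) by simp
qed

definition subset_tuples :: "nat \<Rightarrow> nat \<Rightarrow> nat \<Rightarrow> nat set list set" where
  "subset_tuples r N W = {Ss \<in> lists pos_sets. length Ss = r
      \<and> sum_list (map card Ss) = N \<and> sum_list (map Sum Ss) = W}"

lemma card_subset_tuples_eq_A_count:
  assumes "r > 0"
  shows "card (subset_tuples r (r * d) (j + r * d * (d + 1) div 2)) = A_count r d j"
proof -
  obtain h where h: "bij_betw h pos_sets young_pairs"
    and card_h: "\<And>S. S \<in> pos_sets \<Longrightarrow> fst (h S) = card S"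
    and Sum_h: "\<And>S. S \<in> pos_sets \<Longrightarrow> ysize (snd (h S)) + triangular (card S) = \<Sum>S"
    using obtain_pos_sets_young_pairs_bij by blast
  let ?K = "r * d * (d + 1) div 2"
  let ?Q = "\<lambda>t. length t = r \<and> sum_list (map fst t) = r * d
      \<and> real (sum_list (map (ysize \<circ> snd) t)) + pairing (map fst t) / 2 = real j"
  have "Ss \<in> subset_tuples r (r * d) (j + ?K) \<longleftrightarrow> ?Q (map h Ss)"
    if "Ss \<in> lists pos_sets" for Ss
  proof -
    have map_fst: "map fst (map h Ss) = map card Ss"
      using that card_h by (induction Ss) auto
    have sum_Sum: "sum_list (map Sum Ss) =
        sum_list (map (ysize \<circ> snd) (map h Ss)) + sum_list (map triangular (map card Ss))"
      using that Sum_h by (induction Ss) auto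
    define Y where "Y = sum_list (map (ysize \<circ> snd) (map h Ss))"
    define T where "T = sum_list (map triangular (map card Ss))"
    show ?thesis
    proof (cases "length Ss = r \<and> sum_list (map card Ss) = r * d")
      case True
      then have T: "real T = real ?K + pairing (map card Ss) / 2"
        using sum_list_triangular_balanced[of "map card Ss" r d] assms by (simp add: T_def)
      have "Ss \<in> subset_tuples r (r * d) (j + ?K) \<longleftrightarrow> Y + T = j + ?K"
        using True that by (simp add: subset_tuples_def sum_Sum Y_def T_def)
      also have "\<dots> \<longleftrightarrow> real Y + real T = real j + real ?K"
        by (simp only: of_nat_add [symmetric] of_nat_eq_iff)
      also have "\<dots> \<longleftrightarrow> real Y + pairing (map card Ss) / 2 = real j"
        using T by linarith
      also have "\<dots> \<longleftrightarrow> ?Q (map h Ss)"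
        using True unfolding map_fst Y_def by simp
      finally show ?thesis .
    next
      case False
      then show ?thesis
        unfolding map_fst by (auto simp: subset_tuples_def)
    qed
  qed
  then have "bij_betw (map h) (subset_tuples r (r * d) (j + ?K)) {t \<in> lists young_pairs. ?Q t}"
    using bij_betw_Collect[OF bij_lists[OF h]] by (simp add: subset_tuples_def)
  moreover have "{t \<in> lists young_pairs. ?Q t} = {t. length t = r
      \<and> (\<forall>p\<in>set t. young (snd p) \<and> ncols (snd p) \<le> fst p)
      \<and> sum_list (map fst t) = r * d
      \<and> real (sum_list (map (ysize \<circ> snd) t)) + pairing (map fst t) / 2 = real j}"
    unfolding young_pairs_def by (intro Collect_cong) (auto simp: in_lists_conv_set)
  ultimately show ?thesis
    unfolding A_count_def by (simp only:) (rule bij_betw_same_card)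
qed

section \<open>Occupancy vectors\<close>

definition holders :: "nat set list \<Rightarrow> nat \<Rightarrow> nat set" where
  "holders Ss x = {a. a < length Ss \<and> x \<in> Ss ! a}"

lemma sum_subset_atLeastAtMost:
  assumes "S \<subseteq> {1..L}"
  shows "sum f S = (\<Sum>i<L. if Suc i \<in> S then f (Suc i) else 0)"
proof -
  have "sum f S = sum f ({1..L} \<inter> S)"
    using assms by (simp add: Int_absorb1)
  also have "\<dots> = (\<Sum>x = Suc 0..L. if x \<in> S then f x else 0)"
    by (simp add: sum.inter_restrict)
  also have "\<dots> = (\<Sum>i<L. if Suc i \<in> S then f (Suc i) else 0)"
    by (rule sum.atLeast1_atMost_eq)
  finally show ?thesis .
qed

lemma sum_list_map_sum_eq_holders:
  assumes "\<forall>S\<in>set Ss. S \<subseteq> {1..L}"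
  shows "sum_list (map (sum f) Ss) = (\<Sum>i<L. f (Suc i) * card (holders Ss (Suc i)))"
proof -
  have "sum_list (map (sum f) Ss) = (\<Sum>a<length Ss. \<Sum>i<L. if Suc i \<in> Ss ! a then f (Suc i) else 0)"
    unfolding sum_list_sum_nth atLeast0LessThan length_map
    by (rule sum.cong) (use assms in \<open>auto simp: sum_subset_atLeastAtMost\<close>)
  also have "\<dots> = (\<Sum>i<L. \<Sum>a<length Ss. if Suc i \<in> Ss ! a then f (Suc i) else 0)"
    by (rule sum.swap)
  also have "\<dots> = (\<Sum>i<L. f (Suc i) * card (holders Ss (Suc i)))"
    by (simp add: sum.If_cases lessThan_def Int_def mult.commute holders_def)
  finally show ?thesis .
qed

text \<open>Transposing the incidence matrix between the \<open>r\<close> sets and the points \<open>1, \<dots>, L\<close>.\<close>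

lemma bij_betw_holders:
  "bij_betw (\<lambda>Ss. \<lambda>i\<in>{..<L}. holders Ss (Suc i))
     {Ss. length Ss = r \<and> (\<forall>S\<in>set Ss. S \<subseteq> {1..L})} ({..<L} \<rightarrow>\<^sub>E Pow {..<r})"
  (is "bij_betw ?\<phi> ?T ?F")
proof -
  define \<psi> where "\<psi> f = map (\<lambda>a. Suc ` {i. i < L \<and> a \<in> f i}) [0..<r]"
    for f :: "nat \<Rightarrow> nat set"
  have "\<psi> (?\<phi> Ss) = Ss" if Ss: "Ss \<in> ?T" for Ss
  proof (rule nth_equalityI)
    show "length (\<psi> (?\<phi> Ss)) = length Ss"
      using Ss by (simp add: \<psi>_def)
    fix a assume "a < length (\<psi> (?\<phi> Ss))"
    then have a: "a < r" "a < length Ss" and sub: "Ss ! a \<subseteq> {1..L}"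
      using Ss by (auto simp: \<psi>_def)
    have "Suc ` {i. i < L \<and> a \<in> ?\<phi> Ss i} = Ss ! a"
    proof (intro set_eqI iffI)
      fix x assume "x \<in> Ss ! a"
      moreover from this sub have "x \<in> {1..L}" by blast
      then have "x = Suc (x - 1)" "x - 1 < L" by auto
      ultimately show "x \<in> Suc ` {i. i < L \<and> a \<in> ?\<phi> Ss i}"
        using a by (intro image_eqI[of _ _ "x - 1"]) (auto simp: holders_def)
    qed (auto simp: holders_def)
    then show "\<psi> (?\<phi> Ss) ! a = Ss ! a"
      using a by (simp add: \<psi>_def)
  qed
  moreover have "?\<phi> (\<psi> f) = f" if f: "f \<in> ?F" for f
  proof
    fix i
    show "?\<phi> (\<psi> f) i = f i"
    proof (cases "i < L")
      case True
      with f have "f i \<subseteq> {..<r}" by auto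
      with True show ?thesis by (auto simp: \<psi>_def holders_def)
    next
      case False
      with f show ?thesis by (auto simp: PiE_def extensional_def)
    qed
  qed
  moreover have "?\<phi> ` ?T \<subseteq> ?F"
    by (auto simp: holders_def)
  moreover have "\<psi> ` ?F \<subseteq> ?T"
    by (auto simp: \<psi>_def)
  ultimately show ?thesis
    by (intro bij_betw_byWitness[where f' = \<psi>]) auto
qed

definition tuples_with_occupancy :: "nat \<Rightarrow> nat list \<Rightarrow> nat set list set" where
  "tuples_with_occupancy r ks = {Ss. length Ss = r \<and> (\<forall>S\<in>set Ss. S \<subseteq> {1..length ks})
     \<and> (\<forall>i<length ks. card (holders Ss (Suc i)) = ks ! i)}"

lemma card_tuples_with_occupancy:
  "card (tuples_with_occupancy r ks) = (\<Prod>i<length ks. r choose (ks ! i))"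
proof -
  let ?L = "length ks"
  have "bij_betw (\<lambda>Ss. \<lambda>i\<in>{..<?L}. holders Ss (Suc i)) (tuples_with_occupancy r ks)
      {f \<in> {..<?L} \<rightarrow>\<^sub>E Pow {..<r}. \<forall>i<?L. card (f i) = ks ! i}"
    unfolding tuples_with_occupancy_def
    using bij_betw_Collect[OF bij_betw_holders] by simp
  moreover have "{f \<in> {..<?L} \<rightarrow>\<^sub>E Pow {..<r}. \<forall>i<?L. card (f i) = ks ! i}
      = (\<Pi>\<^sub>E i\<in>{..<?L}. {A. A \<subseteq> {..<r} \<and> card A = ks ! i})"
    by (auto simp: PiE_def Pi_def)
  ultimately have "card (tuples_with_occupancy r ks) =
      (\<Prod>i<?L. card {A. A \<subseteq> {..<r} \<and> card A = ks ! i})"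
    by (simp add: bij_betw_same_card card_PiE)
  then show ?thesis
    by (simp add: n_subsets)
qed

lemma sum_list_map_card_eq_holders:
  "\<forall>S\<in>set Ss. S \<subseteq> {1..L} \<Longrightarrow>
    sum_list (map card Ss) = (\<Sum>i<L. card (holders Ss (Suc i)))"
proof -
  have "sum (\<lambda>_. 1) = (card :: nat set \<Rightarrow> nat)"
    by (simp add: fun_eq_iff)
  then show "\<forall>S\<in>set Ss. S \<subseteq> {1..L} \<Longrightarrow> ?thesis"
    using sum_list_map_sum_eq_holders[of Ss L "\<lambda>_. 1"] by simp
qed

lemma sum_list_map_Sum_eq_holders:
  "\<forall>S\<in>set Ss. S \<subseteq> {1..L} \<Longrightarrow>
    sum_list (map Sum Ss) = (\<Sum>i<L. (i + 1) * card (holders Ss (Suc i)))"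
  using sum_list_map_sum_eq_holders[of Ss L "\<lambda>x. x"] by simp

text \<open>Cutting the list at the largest element
  makes its last entry nonzero, as for the canonical representatives in \<open>Theta\<close>.\<close>

definition occupancy :: "nat set list \<Rightarrow> nat list" where
  "occupancy Ss = map (\<lambda>i. card (holders Ss (Suc i))) [0..<Max (insert 0 (\<Union>(set Ss)))]"

lemma occupancy_eq:
  assumes "\<forall>S\<in>set Ss. S \<subseteq> {1..L}" and "L = 0 \<or> L \<in> \<Union>(set Ss)"
  shows "occupancy Ss = map (\<lambda>i. card (holders Ss (Suc i))) [0..<L]"
proof -
  have "\<Union>(set Ss) \<subseteq> {1..L}"
    using assms(1) by blast
  with assms(2) have "Max (insert 0 (\<Union>(set Ss))) = L"
    by (intro Max_eqI) (auto intro: finite_subset)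
  then show ?thesis
    by (simp add: occupancy_def)
qed

lemma pos_sets_bounded_by_Max:
  assumes "set Ss \<subseteq> pos_sets"
  defines "L \<equiv> Max (insert 0 (\<Union>(set Ss)))"
  shows "\<forall>S\<in>set Ss. S \<subseteq> {1..L}" and "L = 0 \<or> L \<in> \<Union>(set Ss)"
proof -
  have fin: "finite (\<Union>(set Ss))"
    using assms(1) by (auto simp: pos_sets_def)
  show "\<forall>S\<in>set Ss. S \<subseteq> {1..L}"
  proof (intro ballI subsetI)
    fix S x assume "S \<in> set Ss" "x \<in> S"
    moreover from this assms(1) have "0 \<notin> S"
      by (auto simp: pos_sets_def)
    ultimately have "x \<noteq> 0" "x \<in> \<Union>(set Ss)"
      by (metis, blast)
    then show "x \<in> {1..L}"
      using fin by (auto simp: L_def intro: Max_ge)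
  qed
  show "L = 0 \<or> L \<in> \<Union>(set Ss)"
    using Max_in[of "insert 0 (\<Union>(set Ss))"] fin by (auto simp: L_def)
qed

lemma card_holders_le: "card (holders Ss x) \<le> length Ss"
  using card_mono[of "{..<length Ss}" "holders Ss x"] by (auto simp: holders_def)

lemma card_holders_pos: "x \<in> \<Union>(set Ss) \<Longrightarrow> card (holders Ss x) > 0"
  by (auto simp: holders_def card_gt_0_iff in_set_conv_nth)

definition occupancy_vectors :: "nat \<Rightarrow> nat \<Rightarrow> nat \<Rightarrow> nat list set" where
  "occupancy_vectors r N W = {ks. (ks = [] \<or> last ks \<noteq> 0)
      \<and> (\<forall>i<length ks. ks ! i \<le> r)
      \<and> sum_list ks = N
      \<and> (\<Sum>i<length ks. (i + 1) * ks ! i) = W}"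

lemma occupancy_in_occupancy_vectors:
  assumes "Ss \<in> subset_tuples r N W"
  shows "occupancy Ss \<in> occupancy_vectors r N W"
proof -
  define L where "L = Max (insert 0 (\<Union>(set Ss)))"
  have Ss: "set Ss \<subseteq> pos_sets" "length Ss = r"
    "sum_list (map card Ss) = N" "sum_list (map Sum Ss) = W"
    using assms by (auto simp: subset_tuples_def)
  have bounded: "\<forall>S\<in>set Ss. S \<subseteq> {1..L}" and top: "L = 0 \<or> L \<in> \<Union>(set Ss)"
    using pos_sets_bounded_by_Max[OF Ss(1)] by (simp_all add: L_def)
  have occ: "occupancy Ss = map (\<lambda>i. card (holders Ss (Suc i))) [0..<L]"
    by (rule occupancy_eq[OF bounded top])
  have "occupancy Ss = [] \<or> last (occupancy Ss) \<noteq> 0"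
    using top card_holders_pos[of L Ss] by (cases L) (auto simp: occ last_map)
  moreover have "sum_list (occupancy Ss) = N"
    using sum_list_map_card_eq_holders[OF bounded] Ss(3)
    by (simp add: occ sum_list_sum_nth atLeast0LessThan)
  moreover have "(\<Sum>i<length (occupancy Ss). (i + 1) * occupancy Ss ! i) = W"
    using sum_list_map_Sum_eq_holders[OF bounded] Ss(4) by (simp add: occ)
  ultimately show ?thesis
    using card_holders_le[of Ss] Ss(2) by (simp add: occupancy_vectors_def occ)
qed

lemma tuples_with_occupancy_in_subset_tuples:
  assumes ks: "ks \<in> occupancy_vectors r N W" and Ss: "Ss \<in> tuples_with_occupancy r ks"
  shows "Ss \<in> subset_tuples r N W" and "occupancy Ss = ks"
proof -
  have len: "length Ss = r" and bounded: "\<forall>S\<in>set Ss. S \<subseteq> {1..length ks}"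
    and cards: "\<And>i. i < length ks \<Longrightarrow> card (holders Ss (Suc i)) = ks ! i"
    using Ss by (auto simp: tuples_with_occupancy_def)
  have "set Ss \<subseteq> pos_sets"
  proof
    fix S assume "S \<in> set Ss"
    with bounded have "S \<subseteq> {1..length ks}" by blast
    then show "S \<in> pos_sets"
      by (auto simp: pos_sets_def intro: finite_subset)
  qed
  have "length ks = 0 \<or> length ks \<in> \<Union>(set Ss)"
  proof (cases ks rule: rev_cases)
    case (snoc ks' k)
    with ks cards[of "length ks'"] have "holders Ss (length ks) \<noteq> {}"
      by (auto simp: occupancy_vectors_def)
    then show ?thesis
      by (auto simp: holders_def)
  qed simp
  then have "occupancy Ss = map (\<lambda>i. card (holders Ss (Suc i))) [0..<length ks]"
    by (rule occupancy_eq[OF bounded])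
  also have "\<dots> = ks"
    by (rule nth_equalityI) (simp_all add: cards)
  finally show "occupancy Ss = ks" .
  have "sum_list (map card Ss) = N"
    using sum_list_map_card_eq_holders[OF bounded] ks
    by (simp add: cards occupancy_vectors_def sum_list_sum_nth atLeast0LessThan)
  moreover have "sum_list (map Sum Ss) = W"
    using sum_list_map_Sum_eq_holders[OF bounded] ks
    by (simp add: cards occupancy_vectors_def)
  ultimately show "Ss \<in> subset_tuples r N W"
    using \<open>set Ss \<subseteq> pos_sets\<close> len by (simp add: subset_tuples_def lists_eq_set)
qed

lemma subset_tuples_occupancy_fibre:
  assumes ks: "ks \<in> occupancy_vectors r N W"
  shows "{Ss \<in> subset_tuples r N W. occupancy Ss = ks} = tuples_with_occupancy r ks"
proof (intro set_eqI iffI)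
  fix Ss assume "Ss \<in> {Ss \<in> subset_tuples r N W. occupancy Ss = ks}"
  then have Ss: "set Ss \<subseteq> pos_sets" "length Ss = r" and occ: "occupancy Ss = ks"
    by (auto simp: subset_tuples_def)
  define L where "L = Max (insert 0 (\<Union>(set Ss)))"
  have bounded: "\<forall>S\<in>set Ss. S \<subseteq> {1..L}"
    using pos_sets_bounded_by_Max(1)[OF Ss(1)] by (simp add: L_def)
  have "length ks = L"
    using occ [symmetric] by (simp add: occupancy_def L_def [symmetric])
  with occ bounded Ss(2) show "Ss \<in> tuples_with_occupancy r ks"
    by (auto simp: tuples_with_occupancy_def occupancy_def L_def [symmetric])
next
  fix Ss assume "Ss \<in> tuples_with_occupancy r ks"
  with tuples_with_occupancy_in_subset_tuples[OF ks]
  show "Ss \<in> {Ss \<in> subset_tuples r N W. occupancy Ss = ks}"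
    by blast
qed

lemma finite_subset_tuples: "finite (subset_tuples r N W)"
proof (rule finite_subset)
  show "subset_tuples r N W \<subseteq> {Ss. set Ss \<subseteq> Pow {..W} \<and> length Ss = r}"
  proof
    fix Ss assume Ss: "Ss \<in> subset_tuples r N W"
    have "S \<subseteq> {..W}" if S: "S \<in> set Ss" for S
    proof
      fix x assume "x \<in> S"
      moreover have "finite S"
        using Ss S by (auto simp: subset_tuples_def pos_sets_def)
      ultimately have "x \<le> \<Sum>S"
        using member_le_sum[of x S id] by simp
      also have "\<dots> \<le> sum_list (map Sum Ss)"
        using S by (simp add: member_le_sum_list)
      finally show "x \<in> {..W}"
        using Ss by (simp add: subset_tuples_def)
    qed
    with Ss show "Ss \<in> {Ss. set Ss \<subseteq> Pow {..W} \<and> length Ss = r}"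
      by (auto simp: subset_tuples_def)
  qed
  show "finite {Ss. set Ss \<subseteq> Pow {..W} \<and> length Ss = r}"
    by (rule finite_lists_length_eq) simp
qed

lemma sum_prod_choose_eq_card_subset_tuples:
  "(\<Sum>ks\<in>occupancy_vectors r N W. \<Prod>i<length ks. r choose (ks ! i)) = card (subset_tuples r N W)"
proof -
  have "occupancy ` subset_tuples r N W = occupancy_vectors r N W"
  proof
    show "occupancy ` subset_tuples r N W \<subseteq> occupancy_vectors r N W"
      using occupancy_in_occupancy_vectors by blast
    show "occupancy_vectors r N W \<subseteq> occupancy ` subset_tuples r N W"
    proof
      fix ks assume ks: "ks \<in> occupancy_vectors r N W"
      then have "card (tuples_with_occupancy r ks) \<noteq> 0"
        by (auto simp: card_tuples_with_occupancy occupancy_vectors_def)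
      then have "{Ss \<in> subset_tuples r N W. occupancy Ss = ks} \<noteq> {}"
        by (metis card.empty subset_tuples_occupancy_fibre[OF ks])
      then show "ks \<in> occupancy ` subset_tuples r N W"
        by blast
    qed
  qed
  then have "card (subset_tuples r N W) =
      (\<Sum>ks\<in>occupancy_vectors r N W. card {Ss \<in> subset_tuples r N W. occupancy Ss = ks})"
    using sum.image_gen[OF finite_subset_tuples[of r N W], where h = "\<lambda>_. 1 :: nat" and g = occupancy]
    by simp
  also have "\<dots> = (\<Sum>ks\<in>occupancy_vectors r N W. \<Prod>i<length ks. r choose (ks ! i))"
    by (simp add: subset_tuples_occupancy_fibre card_tuples_with_occupancy)
  finally show ?thesis ..
qed

theorem lemma5p3:
  fixes r d j :: nat
  assumes "r > 0"
  shows "A_tilde r d j = A_count r d j"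
proof -
  have "A_tilde r d j =
      (\<Sum>ks\<in>occupancy_vectors r (r * d) (j + r * d * (d + 1) div 2). \<Prod>i<length ks. r choose (ks ! i))"
    by (simp add: A_tilde_def Theta_def occupancy_vectors_def)
  also have "\<dots> = card (subset_tuples r (r * d) (j + r * d * (d + 1) div 2))"
    by (rule sum_prod_choose_eq_card_subset_tuples)
  also have "\<dots> = A_count r d j"
    by (rule card_subset_tuples_eq_A_count[OF assms])
  finally show ?thesis .
qed

end
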